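(* Let $\beta>1$ be a Yrrap number. For $w\in\mathcal{L}(\Sigma_{-\beta})$ let $g_\beta(w)$ be the minimal integer $i\ge0$ such that there exist $v\in\mathcal{L}_i(\Sigma_{-\beta})$ and integers $0\le c<d\le b$ with $wvc,wvd\in\mathcal{L}(\Sigma_{-\beta})$, and let $g_\beta(n)=\sup_{w\in\mathcal{L}_n(\Sigma_{-\beta})}g_\beta(w)$. If $\lim_{n\to\infty}g_\beta(n)/n=0$, then $$\liminf_{n\to\infty}\inf_{w\in\mathcal{L}_n(\Sigma_{-\beta})}\Big(\frac1n\log L_{-\beta}([w])+\log\beta\Big)\ge0.$$
   Context: $(-\beta)$-transformation: $b=\max\{k\in\mathbb{Z}:k<\beta\}$, $I_i=(i/\beta,(i+1)/\beta)$ ($0\le i\le b-1$), $I_b=(b/\beta,1)$, $T_{-\beta}(x)=-\beta x+(i+1)$ on $I_i$; for $x\notin\bigcup_{i\ge0}T_{-\beta}^{-i}\{0,1/\beta,\dots,b/\beta,1\}$, $(i'(x))_k=j$ iff $T_{-\beta}^k(x)\in I_j$; $i'(1)=\lim_{x\to1^-}i'(x)$. Case 1: $i'(1)=(w0)^\infty$ for some finite word $w$; then $T_{-\beta}(0)=1$, $T_{-\beta}(i/\beta)=0$ ($1\le i\le b$), $T_{-\beta}(1)=\lim_{x\to1^-}T_{-\beta}(x)$. Case 2: otherwise; $T_{-\beta}(0)=1$, $T_{-\beta}(i/\beta)=1$ ($1\le i\le b$), $T_{-\beta}(1)=\lim_{x\to1^-}T_{-\beta}(x)$. Yrrap: the $T_{-\beta}$-orbit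 of $1$ is eventually periodic. $\Sigma_{-\beta}$: closure in $\{0,\dots,b\}^{\mathbb{Z}_+}$ of the set of $i'(x)$ over non-preimages $x$ of partition points, with shift $\sigma$; $\mathcal{L}(\Sigma_{-\beta})$ its language, $\mathcal{L}_n$ words of length $n$, $[w]$ cylinder sets. $\Phi\colon[0,1]\to\Sigma_{-\beta}$: in Case 1 let $J_0=[0,1/\beta]$, $J_i=(i/\beta,(i+1)/\beta]$ ($1\le i\le b-1$), $J_b=(b/\beta,1]$; in Case 2 let $J_i=[i/\beta,(i+1)/\beta)$ ($0\le i\le b-1$), $J_b=[b/\beta,1]$; $(\Phi(x))_i=j$ iff $T_{-\beta}^i(x)\in J_j$. $L_{-\beta}=L\circ\Phi^{-1}$, $L$ Lebesgue measure. *)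

theory Defs
  imports "HOL-Analysis.Analysis"
begin

definition bnum :: "real \<Rightarrow> nat" where
  "bnum \<beta> = nat (GREATEST k::int. of_int k < \<beta>)"

text \<open>Generic formula of T on the open intervals I_i: T x = -beta x + (i+1) where i = floor(beta x).\<close>
definition Tgen :: "real \<Rightarrow> real \<Rightarrow> real" where
  "Tgen \<beta> x = of_int \<lfloor>\<beta> * x\<rfloor> + 1 - \<beta> * x"

definition ppts :: "real \<Rightarrow> real set" where
  "ppts \<beta> = {1} \<union> {real i / \<beta> | i. i \<le> bnum \<beta>}"

definition Gset :: "real \<Rightarrow> real set" where
  "Gset \<beta> = {x \<in> {0..1}. \<forall>k. (Tgen \<beta> ^^ k) x \<notin> ppts \<beta>}"

text \<open>The coding i'(x) of non-preimages: digit k is j iff T^k x lies in I_j.\<close>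
definition idig :: "real \<Rightarrow> real \<Rightarrow> nat \<Rightarrow> nat" where
  "idig \<beta> x k = nat \<lfloor>\<beta> * (Tgen \<beta> ^^ k) x\<rfloor>"

text \<open>i'(1) = lim_{x -> 1^-} i'(x) (product topology on sequences of naturals).\<close>
definition ione :: "real \<Rightarrow> nat \<Rightarrow> nat" where
  "ione \<beta> = (THE s. (idig \<beta> \<longlongrightarrow> s) (at 1 within Gset \<beta>))"

definition case1 :: "real \<Rightarrow> bool" where
  "case1 \<beta> \<longleftrightarrow> (\<exists>w::nat list. ione \<beta> = (\<lambda>k. (w @ [0]) ! (k mod (length w + 1))))"

definition Tfull :: "real \<Rightarrow> real \<Rightarrow> real" where
  "Tfull \<beta> x =
     (if x = 0 then 1
      else if x = 1 then Lim (at_left 1) (Tgen \<beta>)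
      else if x \<in> {real i / \<beta> | i. 1 \<le> i \<and> i \<le> bnum \<beta>} then (if case1 \<beta> then 0 else 1)
      else Tgen \<beta> x)"

definition yrrap :: "real \<Rightarrow> bool" where
  "yrrap \<beta> \<longleftrightarrow> (\<exists>m p. p > 0 \<and> (Tfull \<beta> ^^ (m + p)) 1 = (Tfull \<beta> ^^ m) 1)"

definition Sigma_mb :: "real \<Rightarrow> (nat \<Rightarrow> nat) set" where
  "Sigma_mb \<beta> = closure (idig \<beta> ` Gset \<beta>)"

definition lang :: "real \<Rightarrow> nat list set" where
  "lang \<beta> = {w. \<exists>s\<in>Sigma_mb \<beta>. \<exists>k. \<forall>j<length w. s (k + j) = w ! j}"

definition langn :: "real \<Rightarrow> nat \<Rightarrow> nat list set" where
  "langn \<beta> n = {w \<in> lang \<beta>. length w = n}"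

definition cyl :: "real \<Rightarrow> nat list \<Rightarrow> (nat \<Rightarrow> nat) set" where
  "cyl \<beta> w = {s \<in> Sigma_mb \<beta>. \<forall>j<length w. s j = w ! j}"

definition Jset :: "real \<Rightarrow> nat \<Rightarrow> real set" where
  "Jset \<beta> j =
     (if case1 \<beta> then
        (if j = 0 then {0..1/\<beta>}
         else if j < bnum \<beta> then {real j/\<beta><..(real j + 1)/\<beta>}
         else {real (bnum \<beta>)/\<beta><..1})
      else
        (if j < bnum \<beta> then {real j/\<beta>..<(real j + 1)/\<beta>}
         else {real (bnum \<beta>)/\<beta>..1}))"

definition Phi :: "real \<Rightarrow> real \<Rightarrow> nat \<Rightarrow> nat" where
  "Phi \<beta> x i = (THE j. j \<le> bnum \<beta> \<and> (Tfull \<beta> ^^ i) x \<in> Jset \<beta> j)"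

text \<open>L_{-beta} = Lebesgue measure on [0,1] pushed forward by Phi, evaluated on a cylinder.\<close>
definition Lmb :: "real \<Rightarrow> nat list \<Rightarrow> real" where
  "Lmb \<beta> w = measure lborel {x \<in> {0..1}. Phi \<beta> x \<in> cyl \<beta> w}"

text \<open>g_beta(w) and g_beta(n), valued in the extended reals (Inf of empty set = infinity).\<close>
definition gw :: "real \<Rightarrow> nat list \<Rightarrow> ereal" where
  "gw \<beta> w = Inf {ereal (real i) | i. \<exists>v \<in> langn \<beta> i. \<exists>c d. c < d \<and> d \<le> bnum \<beta> \<and>
                     w @ v @ [c] \<in> lang \<beta> \<and> w @ v @ [d] \<in> lang \<beta>}"

definition gn :: "real \<Rightarrow> nat \<Rightarrow> ereal" where
  "gn \<beta> n = (SUP w \<in> langn \<beta> n. gw \<beta> w)"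

definition elog :: "real \<Rightarrow> ereal" where
  "elog x = (if x > 0 then ereal (ln x) else -\<infinity>)"

end

theory Submission
  imports Defs
begin

text \<open>
  The orbit of 1 is finite (Yrrap), so the endpoints of the intervals T^k[u], for cylinders
  [u] of length k, range over a finite set of orbit points, which keeps a distance
  delta > 0 from the partition points. On [u] the map T^k is affine with slope
  +-beta^k. If wv can be followed by two digits c < d, then T^|wv|[wv] contains points on
  both sides of d/beta, so it has length at least delta, whence
  L([w]) >= L([wv]) >= delta beta^-|wv|. Taking |v| <= g(n) = o(n) gives the bound.
\<close>

lemma bnum_bounds:
  assumes "\<beta> > 1"
  shows int_bnum: "int (bnum \<beta>) = \<lceil>\<beta>\<rceil> - 1"
    and bnum_less: "real (bnum \<beta>) < \<beta>"
    and le_bnum_Suc: "\<beta> \<le> real (bnum \<beta>) + 1"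
proof -
  have "(GREATEST k::int. of_int k < \<beta>) = \<lceil>\<beta>\<rceil> - 1"
  proof (rule Greatest_equality)
    fix k :: int
    assume "of_int k < \<beta>"
    then have "real_of_int k < real_of_int \<lceil>\<beta>\<rceil>"
      using le_of_int_ceiling[of \<beta>] by linarith
    then show "k \<le> \<lceil>\<beta>\<rceil> - 1"
      by simp
  qed linarith
  moreover have "\<lceil>\<beta>\<rceil> \<ge> 2"
    using assms by (simp add: less_ceiling_iff)
  ultimately show "int (bnum \<beta>) = \<lceil>\<beta>\<rceil> - 1"
    unfolding bnum_def by simp
  then have "real (bnum \<beta>) = real_of_int \<lceil>\<beta>\<rceil> - 1"
    by (metis of_int_1 of_int_diff of_int_of_nat_eq)
  then show "real (bnum \<beta>) < \<beta>" "\<beta> \<le> real (bnum \<beta>) + 1"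
    by linarith+
qed

lemma Tgen_eq: "\<lfloor>\<beta> * x\<rfloor> = a \<Longrightarrow> Tgen \<beta> x = of_int a + 1 - \<beta> * x"
  unfolding Tgen_def by simp

lemma Tgen_pos: "0 < Tgen \<beta> x" and Tgen_le_1: "Tgen \<beta> x \<le> 1"
  unfolding Tgen_def by linarith+

lemma Tgen_funpow_in_unit: "x \<in> {0..1} \<Longrightarrow> (Tgen \<beta> ^^ k) x \<in> {0..1}"
  by (cases k) (auto simp: less_imp_le[OF Tgen_pos] Tgen_le_1)

lemma finite_ppts: "finite (ppts \<beta>)"
proof -
  have "{real i / \<beta> | i. i \<le> bnum \<beta>} = (\<lambda>i. real i / \<beta>) ` {..bnum \<beta>}"
    by auto
  then show ?thesis
    unfolding ppts_def by simp
qed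

lemma divide_in_ppts: "d \<le> bnum \<beta> \<Longrightarrow> real d / \<beta> \<in> ppts \<beta>"
  unfolding ppts_def by blast

lemma Gset_funpow: "x \<in> Gset \<beta> \<Longrightarrow> (Tgen \<beta> ^^ k) x \<in> Gset \<beta>"
proof -
  assume x: "x \<in> Gset \<beta>"
  have "(Tgen \<beta> ^^ k) x \<in> {0..1}"
    using x Tgen_funpow_in_unit unfolding Gset_def by blast
  moreover have "(Tgen \<beta> ^^ m) ((Tgen \<beta> ^^ k) x) \<notin> ppts \<beta>" for m
  proof -
    have "(Tgen \<beta> ^^ m) ((Tgen \<beta> ^^ k) x) = (Tgen \<beta> ^^ (m + k)) x"
      by (simp add: funpow_add)
    then show ?thesis
      using x unfolding Gset_def by simp
  qed
  ultimately show ?thesis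
    unfolding Gset_def by blast
qed

lemma Gset_not_ppts: "x \<in> Gset \<beta> \<Longrightarrow> x \<notin> ppts \<beta>"
  unfolding Gset_def by (metis (mono_tags, lifting) funpow_0 mem_Collect_eq)

lemma Gset_interior:
  assumes b: "\<beta> > 1" and x: "x \<in> Gset \<beta>"
  shows Gset_pos: "0 < x" and Gset_less_1: "x < 1"
    and Gset_not_int: "\<And>i::int. \<beta> * x \<noteq> of_int i"
proof -
  have x01: "0 \<le> x" "x \<le> 1"
    using x unfolding Gset_def by auto
  have np: "x \<notin> ppts \<beta>"
    using Gset_not_ppts[OF x] .
  have "0 \<in> ppts \<beta>" "1 \<in> ppts \<beta>"
    unfolding ppts_def by force+
  then show "0 < x" "x < 1"
    using x01 np by (auto simp: order_le_less)
  show "\<beta> * x \<noteq> of_int i" for i :: int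
  proof
    assume e: "\<beta> * x = of_int i"
    have "0 \<le> \<beta> * x" "\<beta> * x < \<beta>"
      using x01 b \<open>x < 1\<close> by auto
    then have i: "0 \<le> i" "real_of_int i < real_of_int \<lceil>\<beta>\<rceil>"
      using e le_of_int_ceiling[of \<beta>] by linarith+
    then have "nat i \<le> bnum \<beta>"
      using int_bnum[OF b] by simp
    moreover have "x = real (nat i) / \<beta>"
      using e b i(1) by (simp add: field_simps)
    ultimately have "x \<in> ppts \<beta>"
      using divide_in_ppts by simp
    then show False
      using np by simp
  qed
qed

lemma idig_floor:
  assumes "\<beta> > 1" and "x \<in> Gset \<beta>"
  shows "int (idig \<beta> x m) = \<lfloor>\<beta> * (Tgen \<beta> ^^ m) x\<rfloor>"
proof -
  have "0 < (Tgen \<beta> ^^ m) x"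
    using Gset_pos[OF assms(1) Gset_funpow[OF assms(2)]] .
  then show ?thesis
    using assms(1) unfolding idig_def by simp
qed

lemma Tfull_eq_Tgen:
  assumes b: "\<beta> > 1" and "0 < x" "x < 1" "\<And>i::int. \<beta> * x \<noteq> of_int i"
  shows "Tfull \<beta> x = Tgen \<beta> x"
proof -
  have "x \<notin> {real i / \<beta> | i. 1 \<le> i \<and> i \<le> bnum \<beta>}"
  proof
    assume "x \<in> {real i / \<beta> | i. 1 \<le> i \<and> i \<le> bnum \<beta>}"
    then obtain i where "x = real i / \<beta>"
      by auto
    then have "\<beta> * x = of_int (int i)"
      using b by simp
    then show False
      using assms(4) by blast
  qed
  then show ?thesis
    using assms unfolding Tfull_def by auto
qed

lemma Tfull_funpow_Gset:
  assumes b: "\<beta> > 1" and x: "x \<in> Gset \<beta>"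
  shows "(Tfull \<beta> ^^ k) x = (Tgen \<beta> ^^ k) x"
proof (induction k)
  case (Suc k)
  have "(Tgen \<beta> ^^ k) x \<in> Gset \<beta>"
    using Gset_funpow[OF x] .
  then show ?case
    using Suc Tfull_eq_Tgen[OF b Gset_interior[OF b]] by simp
qed simp

lemma Tfull_one:
  assumes b: "\<beta> > 1"
  shows "Tfull \<beta> 1 = real (bnum \<beta>) + 1 - \<beta>"
proof -
  let ?b = "real (bnum \<beta>)"
  have "eventually (\<lambda>x. x \<in> {?b / \<beta><..<1}) (at_left (1::real))"
    using bnum_less[OF b] b by (intro eventually_at_left_real) simp
  then have ev: "eventually (\<lambda>x. ?b + 1 - \<beta> * x = Tgen \<beta> x) (at_left (1::real))"
  proof eventually_elim
    case (elim x)
    have "?b < \<beta> * x" "\<beta> * x < \<beta>"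
      using elim b by (simp_all add: field_simps)
    then have "\<lfloor>\<beta> * x\<rfloor> = int (bnum \<beta>)"
      using le_bnum_Suc[OF b] by (intro floor_unique) auto
    then show ?case
      by (simp add: Tgen_eq)
  qed
  have "((\<lambda>x. ?b + 1 - \<beta> * x) \<longlongrightarrow> ?b + 1 - \<beta> * 1) (at_left (1::real))"
    by (intro tendsto_intros)
  then have "(Tgen \<beta> \<longlongrightarrow> ?b + 1 - \<beta>) (at_left (1::real))"
    using ev by (simp add: tendsto_cong)
  then have "Lim (at_left 1) (Tgen \<beta>) = ?b + 1 - \<beta>"
    by (intro tendsto_Lim) (simp_all add: trivial_limit_at_left_real)
  then show ?thesis
    unfolding Tfull_def by simp
qed

lemma Tfull_in_unit:
  assumes b: "\<beta> > 1"
  shows "Tfull \<beta> x \<in> {0..1}"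
proof (cases "x = 1")
  case True
  then show ?thesis
    using Tfull_one[OF b] bnum_less[OF b] le_bnum_Suc[OF b] by simp
next
  case False
  then show ?thesis
    unfolding Tfull_def using Tgen_pos[of \<beta> x] Tgen_le_1[of \<beta> x] by auto
qed

lemma idig_le_bnum:
  assumes b: "\<beta> > 1" and x: "x \<in> Gset \<beta>"
  shows "idig \<beta> x k \<le> bnum \<beta>"
proof -
  have "\<beta> * (Tgen \<beta> ^^ k) x < \<beta>"
    using Gset_less_1[OF b Gset_funpow[OF x]] b by simp
  then have "\<lfloor>\<beta> * (Tgen \<beta> ^^ k) x\<rfloor> < \<lceil>\<beta>\<rceil>"
    using le_of_int_ceiling[of \<beta>] by linarith
  then show ?thesis
    using idig_floor[OF b x, of k] int_bnum[OF b] by linarith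
qed

lemma Gset_in_Jset_iff:
  assumes b: "\<beta> > 1" and q: "q \<in> Gset \<beta>" and j: "j \<le> bnum \<beta>"
  shows "q \<in> Jset \<beta> j \<longleftrightarrow> \<lfloor>\<beta> * q\<rfloor> = int j"
proof
  have bp: "\<beta> > 0"
    using b by simp
  assume "q \<in> Jset \<beta> j"
  moreover have "(real (bnum \<beta>) + 1) / \<beta> \<ge> 1"
    using le_bnum_Suc[OF b] bp by simp
  ultimately have "real j / \<beta> \<le> q \<and> q \<le> (real j + 1) / \<beta>"
    using j unfolding Jset_def by (auto split: if_splits)
  then have "real j \<le> \<beta> * q \<and> \<beta> * q \<le> real j + 1"
    using bp by (simp add: field_simps)
  then have "real j < \<beta> * q" "\<beta> * q < real j + 1"
    using Gset_not_int[OF b q, of "int j"] Gset_not_int[OF b q, of "int j + 1"] by auto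
  then show "\<lfloor>\<beta> * q\<rfloor> = int j"
    by (intro floor_unique) auto
next
  have bp: "\<beta> > 0"
    using b by simp
  assume fl: "\<lfloor>\<beta> * q\<rfloor> = int j"
  then have "real j < \<beta> * q" "\<beta> * q < real j + 1"
    using Gset_not_int[OF b q, of "int j"] by linarith+
  then have "real j / \<beta> < q" "q < (real j + 1) / \<beta>"
    using bp by (simp_all add: field_simps)
  then show "q \<in> Jset \<beta> j"
    using j Gset_less_1[OF b q] Gset_pos[OF b q] unfolding Jset_def by auto
qed

lemma Phi_Gset:
  assumes b: "\<beta> > 1" and x: "x \<in> Gset \<beta>"
  shows "Phi \<beta> x = idig \<beta> x"
proof
  fix k
  have q: "(Tgen \<beta> ^^ k) x \<in> Gset \<beta>"
    using Gset_funpow[OF x] .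
  have "Phi \<beta> x k = (THE j. j \<le> bnum \<beta> \<and> (Tgen \<beta> ^^ k) x \<in> Jset \<beta> j)"
    unfolding Phi_def Tfull_funpow_Gset[OF b x] ..
  also have "\<dots> = idig \<beta> x k"
  proof (rule the_equality)
    show "idig \<beta> x k \<le> bnum \<beta> \<and> (Tgen \<beta> ^^ k) x \<in> Jset \<beta> (idig \<beta> x k)"
      using Gset_in_Jset_iff[OF b q idig_le_bnum[OF b x]] idig_floor[OF b x, of k] idig_le_bnum[OF b x]
      by simp
  next
    fix j
    assume "j \<le> bnum \<beta> \<and> (Tgen \<beta> ^^ k) x \<in> Jset \<beta> j"
    then have "\<lfloor>\<beta> * (Tgen \<beta> ^^ k) x\<rfloor> = int j"
      using Gset_in_Jset_iff[OF b q] by blast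
    then show "j = idig \<beta> x k"
      using idig_floor[OF b x, of k] by simp
  qed
  finally show "Phi \<beta> x k = idig \<beta> x k" .
qed

definition orbit_pts :: "real \<Rightarrow> real set" where
  "orbit_pts \<beta> = {0, 1} \<union> range (\<lambda>k. (Tfull \<beta> ^^ k) 1)"

lemma orbit_pts_in_unit:
  assumes "\<beta> > 1" and "q \<in> orbit_pts \<beta>"
  shows "q \<in> {0..1}"
proof -
  have "(Tfull \<beta> ^^ k) 1 \<in> {0..1}" for k
    using Tfull_in_unit[OF assms(1)] by (cases k) auto
  then show ?thesis
    using assms(2) unfolding orbit_pts_def by auto
qed

lemma orbit_pts_step:
  assumes b: "\<beta> > 1" and q: "q \<in> orbit_pts \<beta>"
    and l: "real d \<le> \<beta> * q" and u: "\<beta> * q \<le> real d + 1"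
  shows "real d + 1 - \<beta> * q \<in> orbit_pts \<beta>"
proof (cases "\<beta> * q = real d \<or> \<beta> * q = real d + 1")
  case True
  then show ?thesis
    unfolding orbit_pts_def by auto
next
  case False
  then have l': "real d < \<beta> * q" and u': "\<beta> * q < real d + 1"
    using l u by auto
  have not_int: "\<beta> * q \<noteq> of_int i" for i :: int
  proof
    assume "\<beta> * q = of_int i"
    then have "int d < i" "i < int d + 1"
      using l' u' by linarith+
    then show False
      by simp
  qed
  have fl: "\<lfloor>\<beta> * q\<rfloor> = int d"
    using l' u' by (intro floor_unique) auto
  show ?thesis
  proof (cases "q = 1")
    case True
    then have "\<lceil>\<beta>\<rceil> = int d + 1"
      using l' u' by (simp add: ceiling_eq_iff)
    then have "d = bnum \<beta>"
      using int_bnum[OF b] by simp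
    then have "real d + 1 - \<beta> * q = (Tfull \<beta> ^^ 1) 1"
      using Tfull_one[OF b] True by simp
    then show ?thesis
      unfolding orbit_pts_def by blast
  next
    case False
    have "q \<noteq> 0"
      using not_int[of 0] by auto
    then obtain k where k: "q = (Tfull \<beta> ^^ k) 1"
      using q False unfolding orbit_pts_def by auto
    have "0 < q" "q < 1"
      using orbit_pts_in_unit[OF b q] \<open>q \<noteq> 0\<close> False by auto
    then have "Tfull \<beta> q = real d + 1 - \<beta> * q"
      using Tfull_eq_Tgen[OF b _ _ not_int] Tgen_eq[OF fl] by simp
    then have "real d + 1 - \<beta> * q = (Tfull \<beta> ^^ Suc k) 1"
      using k by simp
    then show ?thesis
      unfolding orbit_pts_def by blast
  qed
qed

lemma orbit_pts_step_min:
  assumes b: "\<beta> > 1" and hi: "hi \<in> orbit_pts \<beta>" and "real d \<le> \<beta> * hi"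
  shows "real d + 1 - min (\<beta> * hi) (real d + 1) \<in> orbit_pts \<beta>"
proof (cases "\<beta> * hi \<le> real d + 1")
  case True
  then show ?thesis
    using orbit_pts_step[OF b hi] assms(3) by simp
qed (simp add: orbit_pts_def)

lemma orbit_pts_step_max:
  assumes b: "\<beta> > 1" and lo: "lo \<in> orbit_pts \<beta>" and "\<beta> * lo \<le> real d + 1"
  shows "real d + 1 - max (\<beta> * lo) (real d) \<in> orbit_pts \<beta>"
proof (cases "real d \<le> \<beta> * lo")
  case True
  then show ?thesis
    using orbit_pts_step[OF b lo] assms(3) by simp
qed (simp add: orbit_pts_def)

lemma finite_orbit_pts:
  assumes "yrrap \<beta>"
  shows "finite (orbit_pts \<beta>)"
proof -
  let ?x = "\<lambda>k. (Tfull \<beta> ^^ k) 1"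
  obtain m p where p: "p > 0" and per: "?x (m + p) = ?x m"
    using assms unfolding yrrap_def by blast
  have periodic: "?x (k + p) = ?x k" if "k \<ge> m" for k
  proof -
    have "?x (k + p) = ?x ((k - m) + (m + p))"
      using that by simp
    also have "\<dots> = (Tfull \<beta> ^^ (k - m)) (?x (m + p))"
      by (simp only: funpow_add o_apply)
    also have "\<dots> = (Tfull \<beta> ^^ (k - m)) (?x m)"
      by (simp only: per)
    also have "\<dots> = ?x ((k - m) + m)"
      by (simp only: funpow_add o_apply)
    also have "\<dots> = ?x k"
      using that by simp
    finally show ?thesis .
  qed
  have "?x k \<in> ?x ` {..<m + p}" for k
  proof (induction k rule: less_induct)
    case (less k)
    show ?case
    proof (cases "k < m + p")
      case False
      then have "?x k = ?x (k - p)"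
        using periodic[of "k - p"] by simp
      then show ?thesis
        using less.IH[of "k - p"] p False by simp
    qed simp
  qed
  then have "range ?x \<subseteq> ?x ` {..<m + p}"
    by blast
  then show ?thesis
    unfolding orbit_pts_def by (simp add: finite_subset)
qed

text \<open>The element \<open>1\<close> keeps \<open>Min\<close> meaningful when no orbit point differs from a partition point.\<close>

definition orbit_gap :: "real \<Rightarrow> real" where
  "orbit_gap \<beta> =
     Min (insert 1 ((\<lambda>(o', q). \<bar>o' - q\<bar>) ` {(o', q). o' \<in> orbit_pts \<beta> \<and> q \<in> ppts \<beta> \<and> o' \<noteq> q}))"

lemma orbit_gap_pos_and_le:
  assumes "yrrap \<beta>"
  shows orbit_gap_pos: "orbit_gap \<beta> > 0"
    and orbit_gap_le: "\<And>o' q. o' \<in> orbit_pts \<beta> \<Longrightarrow> q \<in> ppts \<beta> \<Longrightarrow> o' \<noteq> q \<Longrightarrow> orbit_gap \<beta> \<le> \<bar>o' - q\<bar>"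
proof -
  let ?P = "{(o', q). o' \<in> orbit_pts \<beta> \<and> q \<in> ppts \<beta> \<and> o' \<noteq> q}"
  let ?D = "insert 1 ((\<lambda>(o', q). \<bar>o' - q\<bar>) ` ?P)"
  have "?P \<subseteq> orbit_pts \<beta> \<times> ppts \<beta>"
    by auto
  then have fin: "finite ?D"
    using finite_orbit_pts[OF assms] finite_ppts finite_subset by blast
  have "\<forall>x \<in> ?D. x > (0::real)"
    by auto
  then show "orbit_gap \<beta> > 0"
    unfolding orbit_gap_def using fin by (subst Min_gr_iff) auto
  fix o' q
  assume "o' \<in> orbit_pts \<beta>" "q \<in> ppts \<beta>" "o' \<noteq> q"
  then have "\<bar>o' - q\<bar> \<in> ?D"
    by force
  then show "orbit_gap \<beta> \<le> \<bar>o' - q\<bar>"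
    unfolding orbit_gap_def using fin by (rule Min_le[rotated])
qed

definition orbit_interval :: "real \<Rightarrow> real set \<Rightarrow> bool" where
  "orbit_interval \<beta> I \<longleftrightarrow>
     (\<exists>lo \<in> orbit_pts \<beta>. \<exists>hi \<in> orbit_pts \<beta>. {lo<..<hi} \<subseteq> I \<and> I \<subseteq> {lo..hi})"

lemma orbit_interval_Tgen_slice:
  assumes b: "\<beta> > 1" and I: "orbit_interval \<beta> I"
    and q0: "q0 \<in> I" "\<lfloor>\<beta> * q0\<rfloor> = int d"
  shows "orbit_interval \<beta> (Tgen \<beta> ` {q \<in> I. \<lfloor>\<beta> * q\<rfloor> = int d})"
proof -
  obtain lo hi where lo: "lo \<in> orbit_pts \<beta>" and hi: "hi \<in> orbit_pts \<beta>"
    and inner: "{lo<..<hi} \<subseteq> I" and outer: "I \<subseteq> {lo..hi}"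
    using I unfolding orbit_interval_def by blast
  have bp: "\<beta> > 0"
    using b by simp
  define L where "L = max (\<beta> * lo) (real d)"
  define H where "H = min (\<beta> * hi) (real d + 1)"
  have q0_bounds: "\<beta> * lo \<le> \<beta> * q0" "\<beta> * q0 \<le> \<beta> * hi" "real d \<le> \<beta> * q0" "\<beta> * q0 < real d + 1"
    using q0 outer bp by auto linarith+
  have lo': "real d + 1 - H \<in> orbit_pts \<beta>"
    using orbit_pts_step_min[OF b hi] q0_bounds unfolding H_def by simp
  have hi': "real d + 1 - L \<in> orbit_pts \<beta>"
    using orbit_pts_step_max[OF b lo] q0_bounds unfolding L_def by simp
  have "{real d + 1 - H<..<real d + 1 - L} \<subseteq> Tgen \<beta> ` {q \<in> I. \<lfloor>\<beta> * q\<rfloor> = int d}"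
  proof
    fix t
    assume t: "t \<in> {real d + 1 - H<..<real d + 1 - L}"
    define q where "q = (real d + 1 - t) / \<beta>"
    have bq: "\<beta> * q = real d + 1 - t"
      unfolding q_def using bp by simp
    then have "\<beta> * lo < \<beta> * q" "\<beta> * q < \<beta> * hi" "real d < \<beta> * q" "\<beta> * q < real d + 1"
      using t unfolding L_def H_def by auto
    then have "q \<in> I" "\<lfloor>\<beta> * q\<rfloor> = int d"
      using inner bp by (auto intro: floor_unique)
    moreover have "Tgen \<beta> q = t"
      using Tgen_eq[OF \<open>\<lfloor>\<beta> * q\<rfloor> = int d\<close>] bq by simp
    ultimately show "t \<in> Tgen \<beta> ` {q \<in> I. \<lfloor>\<beta> * q\<rfloor> = int d}"
      by blast
  qed
  moreover have "Tgen \<beta> ` {q \<in> I. \<lfloor>\<beta> * q\<rfloor> = int d} \<subseteq> {real d + 1 - H..real d + 1 - L}"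
  proof clarify
    fix q
    assume "q \<in> I" and fl: "\<lfloor>\<beta> * q\<rfloor> = int d"
    then have "\<beta> * lo \<le> \<beta> * q" "\<beta> * q \<le> \<beta> * hi" "real d \<le> \<beta> * q" "\<beta> * q \<le> real d + 1"
      using outer bp by auto linarith+
    then show "Tgen \<beta> q \<in> {real d + 1 - H..real d + 1 - L}"
      using Tgen_eq[OF fl] unfolding L_def H_def by simp
  qed
  ultimately show ?thesis
    using lo' hi' unfolding orbit_interval_def by blast
qed

text \<open>The cylinder \<open>[u]\<close> read in \<open>[0,1]\<close> with the generic branches everywhere;
  on \<open>Gset\<close> it agrees with the coding \<open>idig\<close> (lemma \<open>Gset_in_cell_iff\<close>).\<close>

definition cell :: "real \<Rightarrow> nat list \<Rightarrow> real set" where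
  "cell \<beta> u = {z \<in> {0..1}. \<forall>m < length u. \<lfloor>\<beta> * (Tgen \<beta> ^^ m) z\<rfloor> = int (u ! m)}"

lemma cell_Nil: "cell \<beta> [] = {0..1}"
  unfolding cell_def by auto

lemma cell_snoc: "cell \<beta> (u @ [d]) = {z \<in> cell \<beta> u. \<lfloor>\<beta> * (Tgen \<beta> ^^ length u) z\<rfloor> = int d}"
  unfolding cell_def by (auto simp: nth_append less_Suc_eq)

lemma cell_affine:
  "\<exists>A \<sigma>. (\<sigma> = 1 \<or> \<sigma> = -1) \<and> (\<forall>z \<in> cell \<beta> u. (Tgen \<beta> ^^ length u) z = A + \<sigma> * \<beta> ^ length u * z)"
proof (induction u rule: rev_induct)
  case Nil
  show ?case
    by (rule exI[of _ 0], rule exI[of _ 1]) simp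
next
  case (snoc d u)
  then obtain A \<sigma> where \<sigma>: "\<sigma> = 1 \<or> \<sigma> = -1"
    and aff: "\<forall>z \<in> cell \<beta> u. (Tgen \<beta> ^^ length u) z = A + \<sigma> * \<beta> ^ length u * z"
    by blast
  have "(Tgen \<beta> ^^ length (u @ [d])) z = (real d + 1 - \<beta> * A) + (-\<sigma>) * \<beta> ^ length (u @ [d]) * z"
    if z: "z \<in> cell \<beta> (u @ [d])" for z
  proof -
    have "z \<in> cell \<beta> u" and fl: "\<lfloor>\<beta> * (Tgen \<beta> ^^ length u) z\<rfloor> = int d"
      using z unfolding cell_snoc by auto
    then show ?thesis
      using Tgen_eq[OF fl] aff by (simp add: algebra_simps)
  qed
  moreover have "-\<sigma> = 1 \<or> -\<sigma> = -1"
    using \<sigma> by auto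
  ultimately show ?case
    by blast
qed

lemma cell_image_snoc:
  "(Tgen \<beta> ^^ length (u @ [d])) ` cell \<beta> (u @ [d]) =
     Tgen \<beta> ` {q \<in> (Tgen \<beta> ^^ length u) ` cell \<beta> u. \<lfloor>\<beta> * q\<rfloor> = int d}"
  unfolding cell_snoc by auto

lemma orbit_interval_cell_image:
  assumes b: "\<beta> > 1"
  shows "cell \<beta> u \<noteq> {} \<Longrightarrow> orbit_interval \<beta> ((Tgen \<beta> ^^ length u) ` cell \<beta> u)"
proof (induction u rule: rev_induct)
  case Nil
  have "(0::real) \<in> orbit_pts \<beta>" "(1::real) \<in> orbit_pts \<beta>"
    unfolding orbit_pts_def by simp_all
  then show ?case
    unfolding orbit_interval_def cell_Nil by (intro bexI[of _ 0] bexI[of _ 1]) auto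
next
  case (snoc d u)
  then obtain z0 where z0: "z0 \<in> cell \<beta> (u @ [d])"
    by blast
  then have "z0 \<in> cell \<beta> u" "\<lfloor>\<beta> * (Tgen \<beta> ^^ length u) z0\<rfloor> = int d"
    unfolding cell_snoc by auto
  then show ?case
    unfolding cell_image_snoc using snoc.IH
    by (intro orbit_interval_Tgen_slice[OF b, of _ "(Tgen \<beta> ^^ length u) z0"]) auto
qed

lemma countable_Tgen_vimage:
  assumes b: "\<beta> > 1" and P: "countable P"
  shows "countable (Tgen \<beta> -` P)"
proof -
  have "Tgen \<beta> -` P \<subseteq> (\<lambda>(m, p). (real_of_int m + 1 - p) / \<beta>) ` (UNIV \<times> P)"
  proof
    fix x
    assume "x \<in> Tgen \<beta> -` P"
    moreover have "x = (real_of_int \<lfloor>\<beta> * x\<rfloor> + 1 - Tgen \<beta> x) / \<beta>"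
      using b unfolding Tgen_def by simp
    ultimately show "x \<in> (\<lambda>(m, p). (real_of_int m + 1 - p) / \<beta>) ` (UNIV \<times> P)"
      by (intro image_eqI[of _ _ "(\<lfloor>\<beta> * x\<rfloor>, Tgen \<beta> x)"]) auto
  qed
  moreover have "countable ((UNIV :: int set) \<times> P)"
    using P by (intro countable_SIGMA) auto
  ultimately show ?thesis
    by (metis countable_image countable_subset)
qed

lemma countable_Tgen_funpow_vimage:
  assumes "\<beta> > 1" and "countable P"
  shows "countable ((Tgen \<beta> ^^ k) -` P)"
proof (induction k)
  case (Suc k)
  have "(Tgen \<beta> ^^ Suc k) -` P = Tgen \<beta> -` ((Tgen \<beta> ^^ k) -` P)"
    by (auto simp: funpow_Suc_right simp del: funpow.simps)
  then show ?case
    using countable_Tgen_vimage[OF assms(1) Suc] by (simp del: funpow.simps)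
qed (use assms in simp)

lemma countable_unit_diff_Gset:
  assumes "\<beta> > 1"
  shows "countable ({0..1} - Gset \<beta>)"
proof -
  have "{0..1} - Gset \<beta> \<subseteq> (\<Union>k. (Tgen \<beta> ^^ k) -` ppts \<beta>)"
    unfolding Gset_def by blast
  moreover have "countable (\<Union>k. (Tgen \<beta> ^^ k) -` ppts \<beta>)"
    using countable_Tgen_funpow_vimage[OF assms countable_finite[OF finite_ppts]] by blast
  ultimately show ?thesis
    by (rule countable_subset)
qed

lemma Tgen_funpow_measurable[measurable]: "(Tgen \<beta> ^^ k) \<in> borel_measurable borel"
proof (induction k)
  case (Suc k)
  have "Tgen \<beta> \<in> borel_measurable borel"
    unfolding Tgen_def[abs_def] by measurable
  then show ?case
    using Suc by (simp add: measurable_comp[of _ _ borel, unfolded comp_def] del: funpow.simps)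
qed simp

lemma cell_sets: "cell \<beta> u \<in> sets lborel"
proof -
  have "cell \<beta> u = {z \<in> space borel. z \<in> {0..1} \<and> (\<forall>m < length u. \<lfloor>\<beta> * (Tgen \<beta> ^^ m) z\<rfloor> = int (u ! m))}"
    unfolding cell_def by simp
  also have "\<dots> \<in> sets borel"
    by measurable
  finally show ?thesis
    by simp
qed

lemma cell_fmeasurable: "cell \<beta> u \<in> fmeasurable lborel"
  by (rule fmeasurableI2[OF fmeasurable_cbox[of 0 1] _ cell_sets]) (auto simp: cell_def)

lemma cell_append_subset: "cell \<beta> (w @ v) \<subseteq> cell \<beta> w"
  unfolding cell_def by (auto simp: nth_append)

lemma Gset_in_cell_iff:
  assumes "\<beta> > 1" and "x \<in> Gset \<beta>"
  shows "x \<in> cell \<beta> u \<longleftrightarrow> (\<forall>m < length u. idig \<beta> x m = u ! m)"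
proof -
  have "x \<in> {0..1}"
    using assms(2) unfolding Gset_def by blast
  then show ?thesis
    unfolding cell_def by (simp flip: idig_floor[OF assms])
qed

lemma Lmb_eq_measure_cell:
  assumes b: "\<beta> > 1"
  shows "Lmb \<beta> w = measure lborel (cell \<beta> w)"
proof -
  define S where "S = {x \<in> {0..1}. Phi \<beta> x \<in> cyl \<beta> w}"
  define N where "N = {0..1} - Gset \<beta>"
  have "countable N"
    unfolding N_def using countable_unit_diff_Gset[OF b] .
  then have N: "N \<in> null_sets lborel" and SN: "S \<inter> N \<in> null_sets lborel"
    by (auto intro: countable_imp_null_set_lborel countable_subset[of "S \<inter> N" N])
  have iff: "x \<in> S \<longleftrightarrow> x \<in> cell \<beta> w" if x: "x \<in> Gset \<beta>" for x
  proof -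
    have "idig \<beta> x \<in> Sigma_mb \<beta>"
      unfolding Sigma_mb_def using x closure_subset[of "idig \<beta> ` Gset \<beta>"] by blast
    moreover have "x \<in> {0..1}"
      using x unfolding Gset_def by blast
    ultimately show ?thesis
      unfolding S_def cyl_def Gset_in_cell_iff[OF b x] by (simp add: Phi_Gset[OF b x])
  qed
  have S_split: "S = (cell \<beta> w - N) \<union> (S \<inter> N)"
  proof (intro equalityI subsetI)
    fix x
    assume x: "x \<in> S"
    then have "x \<in> {0..1}"
      unfolding S_def by simp
    then show "x \<in> (cell \<beta> w - N) \<union> (S \<inter> N)"
      using iff x unfolding N_def by blast
  next
    fix x
    assume x: "x \<in> (cell \<beta> w - N) \<union> (S \<inter> N)"
    have "cell \<beta> w \<subseteq> {0..1}"
      unfolding cell_def by blast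
    then show "x \<in> S"
      using iff x unfolding N_def by blast
  qed
  have "cell \<beta> w - N \<in> sets lborel"
    using cell_sets null_setsD2[OF N] by (rule sets.Diff)
  then have "measure lborel S = measure lborel (cell \<beta> w - N)"
    using SN by (subst S_split) (rule measure_Un_null_set)
  also have "\<dots> = measure lborel (cell \<beta> w)"
    using cell_sets N by (rule measure_Diff_null_set)
  finally show ?thesis
    unfolding Lmb_def S_def .
qed

lemma affine_vimage_interval:
  fixes A B lo hi :: real
  assumes B: "B > 0" and "\<sigma> = 1 \<or> \<sigma> = -1"
  shows "\<exists>a. {z. lo < A + \<sigma> * B * z \<and> A + \<sigma> * B * z < hi} = {a<..<a + (hi - lo) / B}"
  using assms(2)
proof (elim disjE)
  assume "\<sigma> = 1"
  then have "{z. lo < A + \<sigma> * B * z \<and> A + \<sigma> * B * z < hi} = {(lo - A) / B<..<(hi - A) / B}"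
    using B by (auto simp: field_simps)
  moreover have "(hi - A) / B = (lo - A) / B + (hi - lo) / B"
    by (simp add: diff_divide_distrib)
  ultimately show ?thesis
    by metis
next
  assume "\<sigma> = -1"
  then have "{z. lo < A + \<sigma> * B * z \<and> A + \<sigma> * B * z < hi} = {(A - hi) / B<..<(A - lo) / B}"
    using B by (auto simp: field_simps)
  moreover have "(A - lo) / B = (A - hi) / B + (hi - lo) / B"
    by (simp add: diff_divide_distrib)
  ultimately show ?thesis
    by metis
qed

lemma cell_measure_ge:
  assumes b: "\<beta> > 1" and inner: "{lo<..<hi} \<subseteq> (Tgen \<beta> ^^ length u) ` cell \<beta> u" and "lo \<le> hi"
  shows "(hi - lo) / \<beta> ^ length u \<le> measure lborel (cell \<beta> u)"
proof -
  define N where "N = length u"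
  obtain A \<sigma> where \<sigma>: "\<sigma> = 1 \<or> \<sigma> = -1"
    and aff: "\<forall>z \<in> cell \<beta> u. (Tgen \<beta> ^^ N) z = A + \<sigma> * \<beta> ^ N * z"
    using cell_affine unfolding N_def by blast
  have bN: "\<beta> ^ N > 0"
    using b by simp
  define Z where "Z = {z. lo < A + \<sigma> * \<beta> ^ N * z \<and> A + \<sigma> * \<beta> ^ N * z < hi}"
  obtain a where Z: "Z = {a<..<a + (hi - lo) / \<beta> ^ N}"
    using affine_vimage_interval[OF bN \<sigma>] unfolding Z_def by blast
  have "Z \<subseteq> cell \<beta> u"
  proof
    fix z
    assume "z \<in> Z"
    then have "A + \<sigma> * \<beta> ^ N * z \<in> (Tgen \<beta> ^^ N) ` cell \<beta> u"
      using inner unfolding Z_def N_def by auto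
    then obtain z' where z': "z' \<in> cell \<beta> u" and "A + \<sigma> * \<beta> ^ N * z = (Tgen \<beta> ^^ N) z'"
      by blast
    then have "\<sigma> * \<beta> ^ N * z = \<sigma> * \<beta> ^ N * z'"
      using aff by simp
    moreover have "\<sigma> * \<beta> ^ N \<noteq> 0"
      using \<sigma> bN by (metis less_irrefl mult_eq_0_iff zero_neq_neg_one zero_neq_one)
    ultimately have "z = z'"
      by (metis mult_left_cancel)
    then show "z \<in> cell \<beta> u"
      using z' by simp
  qed
  then have "measure lborel Z \<le> measure lborel (cell \<beta> u)"
    using cell_fmeasurable by (intro measure_mono_fmeasurable) (auto simp: Z)
  then show ?thesis
    using Z \<open>lo \<le> hi\<close> bN unfolding N_def by simp
qed

lemma open_coordinate_cylinder: "open {t :: nat \<Rightarrow> nat. \<forall>j < n. t (k + j) = u j}"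
proof -
  have "open ((\<lambda>t :: nat \<Rightarrow> nat. t (k + j)) -` {u j})" for j
    by (rule continuous_imp_open_vimage[of UNIV]) (auto simp: open_discrete)
  moreover have "{t :: nat \<Rightarrow> nat. \<forall>j < n. t (k + j) = u j} = (\<Inter>j \<in> {..<n}. (\<lambda>t. t (k + j)) -` {u j})"
    by auto
  ultimately show ?thesis
    by (simp add: open_INT)
qed

lemma lang_cell_Gset:
  assumes b: "\<beta> > 1" and u: "u \<in> lang \<beta>"
  shows "\<exists>y \<in> Gset \<beta>. y \<in> cell \<beta> u"
proof -
  obtain s k where s: "s \<in> Sigma_mb \<beta>" and sk: "\<forall>j < length u. s (k + j) = u ! j"
    using u unfolding lang_def by blast
  let ?U = "{t :: nat \<Rightarrow> nat. \<forall>j < length u. t (k + j) = u ! j}"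
  have "open ?U" and "s \<in> ?U"
    using open_coordinate_cylinder sk by auto
  then have "?U \<inter> idig \<beta> ` Gset \<beta> \<noteq> {}"
    using s open_Int_closure_eq_empty[of ?U "idig \<beta> ` Gset \<beta>"] unfolding Sigma_mb_def by blast
  then obtain x where x: "x \<in> Gset \<beta>" and xu: "\<forall>j < length u. idig \<beta> x (k + j) = u ! j"
    by auto
  define y where "y = (Tgen \<beta> ^^ k) x"
  have y: "y \<in> Gset \<beta>"
    unfolding y_def using Gset_funpow[OF x] .
  have "idig \<beta> y j = idig \<beta> x (k + j)" for j
    unfolding idig_def y_def by (simp add: funpow_add add.commute)
  then have "y \<in> cell \<beta> u"
    using xu Gset_in_cell_iff[OF b y] by simp
  then show ?thesis
    using y by blast
qed

lemma Lmb_ge_orbit_gap: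
  assumes b: "\<beta> > 1" and yr: "yrrap \<beta>"
    and wc: "w @ v @ [c] \<in> lang \<beta>" and wd: "w @ v @ [d] \<in> lang \<beta>"
    and cd: "c < d" "d \<le> bnum \<beta>"
  shows "orbit_gap \<beta> / \<beta> ^ (length w + length v) \<le> Lmb \<beta> w"
proof -
  define u where "u = w @ v"
  let ?T = "Tgen \<beta> ^^ length u"
  obtain y1 y2 where y1: "y1 \<in> Gset \<beta>" "y1 \<in> cell \<beta> (u @ [c])"
    and y2: "y2 \<in> Gset \<beta>" "y2 \<in> cell \<beta> (u @ [d])"
    using lang_cell_Gset[OF b wc] lang_cell_Gset[OF b wd] unfolding u_def by auto
  have in_cell: "y1 \<in> cell \<beta> u" "y2 \<in> cell \<beta> u"
    and digits: "\<lfloor>\<beta> * ?T y1\<rfloor> = int c" "\<lfloor>\<beta> * ?T y2\<rfloor> = int d"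
    using y1(2) y2(2) unfolding cell_snoc by auto
  obtain lo hi where lo: "lo \<in> orbit_pts \<beta>" and hi: "hi \<in> orbit_pts \<beta>"
    and inner: "{lo<..<hi} \<subseteq> ?T ` cell \<beta> u" and outer: "?T ` cell \<beta> u \<subseteq> {lo..hi}"
    using orbit_interval_cell_image[OF b] in_cell unfolding orbit_interval_def by blast
  have bp: "\<beta> > 0"
    using b by simp
  have "\<beta> * ?T y1 < real d"
    using digits(1) cd(1) by linarith
  then have "?T y1 < real d / \<beta>"
    using bp by (simp add: field_simps)
  moreover have "real d / \<beta> < ?T y2"
  proof -
    have "real d \<le> \<beta> * ?T y2"
      using digits(2) by linarith
    then have "real d / \<beta> \<le> ?T y2"
      using bp by (simp add: field_simps)
    moreover have "?T y2 \<notin> ppts \<beta>"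
      using Gset_not_ppts[OF Gset_funpow[OF y2(1)]] .
    ultimately show ?thesis
      using divide_in_ppts[OF cd(2)] by (metis order_le_less)
  qed
  moreover have "lo \<le> ?T y1" "?T y2 \<le> hi"
    using outer in_cell by auto
  ultimately have lo_d: "lo < real d / \<beta>" and d_hi: "real d / \<beta> < hi"
    by linarith+
  then have "orbit_gap \<beta> \<le> hi - real d / \<beta>"
    using orbit_gap_le[OF yr hi divide_in_ppts[OF cd(2)]] by simp
  then have "orbit_gap \<beta> \<le> hi - lo"
    using lo_d by linarith
  then have "orbit_gap \<beta> / \<beta> ^ length u \<le> (hi - lo) / \<beta> ^ length u"
    using bp by (simp add: divide_right_mono)
  also have "\<dots> \<le> measure lborel (cell \<beta> u)"
    using cell_measure_ge[OF b inner] lo_d d_hi by simp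
  also have "\<dots> \<le> measure lborel (cell \<beta> w)"
    unfolding u_def by (intro measure_mono_fmeasurable cell_append_subset cell_sets cell_fmeasurable)
  also have "\<dots> = Lmb \<beta> w"
    using Lmb_eq_measure_cell[OF b] by simp
  finally show ?thesis
    unfolding u_def by simp
qed

lemma gw_attained:
  assumes "gw \<beta> w < \<infinity>"
  obtains v c d where "ereal (real (length v)) \<le> gw \<beta> w" "c < d" "d \<le> bnum \<beta>"
    "w @ v @ [c] \<in> lang \<beta>" "w @ v @ [d] \<in> lang \<beta>"
proof -
  define P where "P i \<longleftrightarrow> (\<exists>v \<in> langn \<beta> i. \<exists>c d. c < d \<and> d \<le> bnum \<beta> \<and>
                     w @ v @ [c] \<in> lang \<beta> \<and> w @ v @ [d] \<in> lang \<beta>)" for i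
  have gw: "gw \<beta> w = Inf {ereal (real i) | i. P i}"
    unfolding gw_def P_def by simp
  have "\<exists>i. P i"
  proof (rule ccontr)
    assume "\<nexists>i. P i"
    then have "gw \<beta> w = \<infinity>"
      unfolding gw by (simp add: top_ereal_def)
    then show False
      using assms by simp
  qed
  then have "P (LEAST i. P i)"
    by (rule LeastI_ex)
  then obtain v c d where v: "v \<in> langn \<beta> (LEAST i. P i)" and "c < d" "d \<le> bnum \<beta>"
    "w @ v @ [c] \<in> lang \<beta>" "w @ v @ [d] \<in> lang \<beta>"
    unfolding P_def by blast
  moreover have "ereal (real (LEAST i. P i)) \<le> gw \<beta> w"
    unfolding gw by (rule Inf_greatest) (auto intro: Least_le)
  moreover have "length v = (LEAST i. P i)"
    using v unfolding langn_def by simp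
  ultimately show ?thesis
    by (metis that)
qed

lemma ln_Lmb_ge:
  assumes b: "\<beta> > 1" and yr: "yrrap \<beta>" and g: "gw \<beta> w \<le> ereal r"
  shows "0 < Lmb \<beta> w"
    and "ln (orbit_gap \<beta>) - (real (length w) + r) * ln \<beta> \<le> ln (Lmb \<beta> w)"
proof -
  have "gw \<beta> w < \<infinity>"
    using g by (cases "gw \<beta> w") auto
  then obtain v c d where i: "ereal (real (length v)) \<le> gw \<beta> w" and "c < d" "d \<le> bnum \<beta>"
    "w @ v @ [c] \<in> lang \<beta>" "w @ v @ [d] \<in> lang \<beta>"
    by (rule gw_attained)
  then have L: "orbit_gap \<beta> / \<beta> ^ (length w + length v) \<le> Lmb \<beta> w"
    using Lmb_ge_orbit_gap[OF b yr] by blast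
  have gap: "orbit_gap \<beta> > 0" and bpow: "\<beta> ^ (length w + length v) > 0"
    using orbit_gap_pos[OF yr] b by simp_all
  then show Lpos: "0 < Lmb \<beta> w"
    using L by (meson divide_pos_pos less_le_trans)
  have "real (length v) \<le> r"
    using i g by (metis ereal_less_eq(3) order.trans)
  then have "ln (orbit_gap \<beta>) - (real (length w) + r) * ln \<beta>
      \<le> ln (orbit_gap \<beta>) - real (length w + length v) * ln \<beta>"
    using b by (simp add: mult_right_mono)
  also have "\<dots> = ln (orbit_gap \<beta> / \<beta> ^ (length w + length v))"
    using gap b by (simp add: ln_div ln_realpow)
  also have "\<dots> \<le> ln (Lmb \<beta> w)"
    using L gap bpow Lpos by (simp add: ln_le_cancel_iff)
  finally show "ln (orbit_gap \<beta>) - (real (length w) + r) * ln \<beta> \<le> ln (Lmb \<beta> w)" .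
qed

lemma normalized_log_Lmb_ge:
  assumes b: "\<beta> > 1" and yr: "yrrap \<beta>"
    and w: "w \<in> langn \<beta> n" and n: "n > 0" and g: "gw \<beta> w \<le> ereal r"
  shows "ereal (ln (orbit_gap \<beta>) / real n - r / real n * ln \<beta>)
           \<le> ereal (1 / real n) * elog (Lmb \<beta> w) + ereal (ln \<beta>)"
proof -
  have "length w = n"
    using w unfolding langn_def by simp
  then have "ln (orbit_gap \<beta>) - (real n + r) * ln \<beta> \<le> ln (Lmb \<beta> w)"
    using ln_Lmb_ge(2)[OF b yr g] by simp
  then have "(ln (orbit_gap \<beta>) - (real n + r) * ln \<beta>) / real n \<le> ln (Lmb \<beta> w) / real n"
    using n by (simp add: divide_right_mono)
  then have "ln (orbit_gap \<beta>) / real n - r / real n * ln \<beta> \<le> ln (Lmb \<beta> w) / real n + ln \<beta>"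
    using n by (simp add: field_simps)
  then show ?thesis
    using ln_Lmb_ge(1)[OF b yr g] unfolding elog_def by simp
qed

lemma ereal_over_n_tendsto_zero:
  fixes f :: "nat \<Rightarrow> ereal"
  assumes lim: "((\<lambda>n. f n / ereal (real n)) \<longlongrightarrow> 0) sequentially"
  shows "\<forall>\<^sub>F n in sequentially. 0 < n \<and> f n = ereal (real_of_ereal (f n))"
    and "(\<lambda>n. real_of_ereal (f n) / real n) \<longlonglongrightarrow> 0"
proof -
  have "\<forall>\<^sub>F n in sequentially. 0 < n \<and> - 1 < f n / ereal (real n) \<and> f n / ereal (real n) < 1"
    using lim by (auto intro!: eventually_conj order_tendstoD eventually_gt_at_top)
  then show fin: "\<forall>\<^sub>F n in sequentially. 0 < n \<and> f n = ereal (real_of_ereal (f n))"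
  proof eventually_elim
    case (elim n)
    then show ?case
      by (cases "f n") auto
  qed
  then have "\<forall>\<^sub>F n in sequentially. ereal (real_of_ereal (f n) / real n) = f n / ereal (real n)"
  proof eventually_elim
    case (elim n)
    then obtain x where "f n = ereal x" and "0 < n"
      by blast
    then show ?case
      by simp
  qed
  then have "(\<lambda>n. ereal (real_of_ereal (f n) / real n)) \<longlonglongrightarrow> ereal 0"
    using lim tendsto_cong by (fastforce simp: zero_ereal_def)
  then show "(\<lambda>n. real_of_ereal (f n) / real n) \<longlonglongrightarrow> 0"
    by simp
qed

theorem lemma6p4:
  fixes \<beta> :: real
  assumes "\<beta> > 1"
    and "yrrap \<beta>"
    and "((\<lambda>n. gn \<beta> n / ereal (real n)) \<longlongrightarrow> 0) sequentially"
  shows "liminf (\<lambda>n. INF w \<in> langn \<beta> n. ereal (1 / real n) * elog (Lmb \<beta> w) + ereal (ln \<beta>)) \<ge> 0"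
proof -
  define r where "r n = real_of_ereal (gn \<beta> n)" for n
  define h where "h n = ln (orbit_gap \<beta>) / real n - r n / real n * ln \<beta>" for n
  note fin = ereal_over_n_tendsto_zero(1)[OF assms(3), folded r_def]
  have "h \<longlonglongrightarrow> 0 - 0 * ln \<beta>"
    unfolding h_def r_def using ereal_over_n_tendsto_zero(2)[OF assms(3)]
    by (intro tendsto_diff tendsto_mult lim_const_over_n tendsto_const)
  then have "(\<lambda>n. ereal (h n)) \<longlonglongrightarrow> 0"
    by (simp add: zero_ereal_def)
  then have "0 = liminf (\<lambda>n. ereal (h n))"
    by (simp add: lim_imp_Liminf)
  also have "\<dots> \<le> liminf (\<lambda>n. INF w \<in> langn \<beta> n. ereal (1 / real n) * elog (Lmb \<beta> w) + ereal (ln \<beta>))"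
    using fin
  proof (intro Liminf_mono, eventually_elim)
    case (elim n)
    have "gw \<beta> w \<le> ereal (r n)" if "w \<in> langn \<beta> n" for w
      using elim SUP_upper[OF that, of "gw \<beta>"] unfolding gn_def by simp
    then show ?case
      unfolding h_def using elim normalized_log_Lmb_ge[OF assms(1,2)] by (blast intro: INF_greatest)
  qed
  finally show ?thesis .
qed

end
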